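(* Let $\Bbbk$ be an algebraically closed field of characteristic zero and $H$ the $\Bbbk$-algebra generated by $b,c,z$ with relations $b^2=c^2=1$, $bc=cb$, $zb=-bz$, $zc=-cz$, $z^2=0$. Let $e_0=\frac14(1+b)(1+c)$, $e_1=\frac14(1+b)(1-c)$, $e_2=\frac14(1-b)(1+c)$, $e_3=\frac14(1-b)(1-c)$, and let $\tau$ be the permutation of $\{0,1,2,3\}$ with $\tau(0)=3,\tau(1)=2,\tau(2)=1,\tau(3)=0$. Then for $0\leq i\leq3$ and any $k\in\{0,1,2,3\}\setminus\{i,\tau(i)\}$, the annihilator ideal of the $H$-module $M(2,i)$ is $(ze_{\tau(i)}+e_k+e_{\tau(k)})$.
   Context: $V_i=\Bbbk v_i$ ($0\leq i\leq3$) are the one-dimensional modules of the group algebra of $\langle b,c\rangle\cong$ Klein four-group with $b\cdot v_0=v_0,c\cdot v_0=v_0$; $b\cdot v_1=v_1,c\cdot v_1=-v_1$; $b\cdot v_2=-v_2,c\cdot v_2=v_2$; $b\cdot v_3=-v_3,c\cdot v_3=-v_3$. $M(2,i)$ is the $2$-dimensional $H$-module with basis $v_i, xv_i$ where $b\cdot(xv_i)=-x(b\cdot v_i)$, $c\cdot(xv_i)=-x(c\cdot v_i)$, $z\cdot v_i=xv_i$, $z\cdot(xv_i)=0$. $(a)$ denotes the two-sided ideal of $H$ generated by $a$. *)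

theory Defs
  imports "HOL-Computational_Algebra.Polynomial"
begin

text \<open>The algebra H = k<b,c,z>/(b^2=c^2=1, bc=cb, zb=-bz, zc=-cz, z^2=0) is realised
on its standard basis b^i c^j z^l (i,j,l in {0,1}): an element is its coefficient
function  h i j l  = coefficient of  b^i c^j z^l  (True = exponent 1).\<close>

type_synonym 'k H = "bool \<Rightarrow> bool \<Rightarrow> bool \<Rightarrow> 'k"

definition hadd :: "'k::field H \<Rightarrow> 'k H \<Rightarrow> 'k H" where
  "hadd f g = (\<lambda>i j l. f i j l + g i j l)"

definition hscale :: "'k::field \<Rightarrow> 'k H \<Rightarrow> 'k H" where
  "hscale a f = (\<lambda>i j l. a * f i j l)"

text \<open>Product of basis elements:
 (b^i1 c^j1 z^l1)(b^i2 c^j2 z^l2) = (-1)^(l1*(i2+j2)) b^(i1+i2) c^(j1+j2) z^(l1+l2),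
 which is 0 if l1 = l2 = 1.\<close>
definition hsign :: "bool \<Rightarrow> bool \<Rightarrow> bool \<Rightarrow> 'k::field" where
  "hsign l1 i2 j2 = (if l1 \<and> i2 \<noteq> j2 then -1 else 1)"

definition hmul :: "'k::field H \<Rightarrow> 'k H \<Rightarrow> 'k H" where
  "hmul f g = (\<lambda>i j l. \<Sum>i1\<in>UNIV. \<Sum>j1\<in>UNIV. \<Sum>l1\<in>UNIV. \<Sum>l2\<in>UNIV.
      if l1 \<and> l2 \<or> (l1 \<or> l2) \<noteq> l then 0
      else hsign l1 (i1 \<noteq> i) (j1 \<noteq> j) * f i1 j1 l1 * g (i1 \<noteq> i) (j1 \<noteq> j) l2)"

definition hbasis :: "bool \<Rightarrow> bool \<Rightarrow> bool \<Rightarrow> 'k::field H" where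
  "hbasis i j l = (\<lambda>i' j' l'. if i' = i \<and> j' = j \<and> l' = l then 1 else 0)"

definition hone :: "'k::field H" where "hone = hbasis False False False"
definition hb :: "'k::field H" where "hb = hbasis True False False"
definition hc :: "'k::field H" where "hc = hbasis False True False"
definition hz :: "'k::field H" where "hz = hbasis False False True"

definition he :: "nat \<Rightarrow> 'k::field H" where
  "he n = hscale (1/4)
     (hmul (hadd hone (hscale (if n = 0 \<or> n = 1 then 1 else -1) hb))
           (hadd hone (hscale (if n = 0 \<or> n = 2 then 1 else -1) hc)))"

definition tau :: "nat \<Rightarrow> nat" where "tau n = 3 - n"

definition ideal_gen :: "'k::field H \<Rightarrow> 'k H set" where
  "ideal_gen a = {h. \<exists>(N::nat) x y. h = (\<lambda>i j l. \<Sum>n<N. hmul (hmul (x n) a) (y n) i j l)}"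

text \<open>Module M(2,n): elements (\<alpha>,\<beta>) stand for \<alpha> v_n + \<beta> x v_n.
 Signs of b and c on v_n.\<close>
definition sb :: "nat \<Rightarrow> 'k::field" where "sb n = (if n = 0 \<or> n = 1 then 1 else -1)"
definition sc :: "nat \<Rightarrow> 'k::field" where "sc n = (if n = 0 \<or> n = 2 then 1 else -1)"

definition actB :: "nat \<Rightarrow> 'k::field \<times> 'k \<Rightarrow> 'k \<times> 'k" where
  "actB n m = (sb n * fst m, - sb n * snd m)"
definition actC :: "nat \<Rightarrow> 'k::field \<times> 'k \<Rightarrow> 'k \<times> 'k" where
  "actC n m = (sc n * fst m, - sc n * snd m)"
definition actZ :: "'k::field \<times> 'k \<Rightarrow> 'k \<times> 'k" where
  "actZ m = (0, fst m)"

definition act_basis :: "nat \<Rightarrow> bool \<Rightarrow> bool \<Rightarrow> bool \<Rightarrow> 'k::field \<times> 'k \<Rightarrow> 'k \<times> 'k" where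
  "act_basis n i j l m =
     (if i then actB n else id) ((if j then actC n else id) ((if l then actZ else id) m))"

definition act :: "nat \<Rightarrow> 'k::field H \<Rightarrow> 'k \<times> 'k \<Rightarrow> 'k \<times> 'k" where
  "act n h m =
    ((\<Sum>i\<in>UNIV. \<Sum>j\<in>UNIV. \<Sum>l\<in>UNIV. h i j l * fst (act_basis n i j l m)),
     (\<Sum>i\<in>UNIV. \<Sum>j\<in>UNIV. \<Sum>l\<in>UNIV. h i j l * snd (act_basis n i j l m)))"

definition annihilator :: "nat \<Rightarrow> 'k::field H set" where
  "annihilator n = {h. \<forall>m. act n h m = (0, 0)}"

definition alg_closed :: "'k::field itself \<Rightarrow> bool" where
  "alg_closed _ = (\<forall>p :: 'k poly. degree p \<ge> 1 \<longrightarrow> (\<exists>x. poly p x = 0))"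

end

theory Submission
  imports Defs
begin

text \<open>In the basis v, x v of M(2,n) every h acts by a lower triangular matrix with diagonal
entries chi n h, chi (tau n) h (the characters of V_n and V_(tau n)) and off-diagonal entry
delta n h. So the annihilator of M(2,i) is cut out by chi i = chi (tau i) = delta i = 0, and
chi, delta are multiplicative in the way the entries of triangular matrices are. The eight
functionals chi m, delta m (m \<le> 3) separate the points of H, with chi m e_n = [m = n],
delta m e_n = 0 and delta m z = 1. As {0,1,2,3} = {i, tau i, k, tau k}, evaluating them shows
that g = z e_(tau i) + e_k + e_(tau k) annihilates M(2,i) and that every annihilating h equals
h (e_k + e_(tau k)) g + delta (tau i) h \<cdot> g e_(tau i).\<close>

definition chi :: "nat \<Rightarrow> 'k::field H \<Rightarrow> 'k" where
  "chi n h = (\<Sum>i\<in>UNIV. \<Sum>j\<in>UNIV.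
     h i j False * (if i then sb n else 1) * (if j then sc n else 1))"

definition delta :: "nat \<Rightarrow> 'k::field H \<Rightarrow> 'k" where
  "delta n h = (\<Sum>i\<in>UNIV. \<Sum>j\<in>UNIV.
     h i j True * (if i then - sb n else 1) * (if j then - sc n else 1))"

lemma sb_tau [simp]: "sb (tau n) = - sb n"
  by (auto simp: sb_def tau_def)

lemma sc_tau [simp]: "sc (tau n) = - sc n"
  by (auto simp: sc_def tau_def)

lemma act_eq: "act n h m = (chi n h * fst m, chi (tau n) h * snd m + delta n h * fst m)"
  unfolding act_def act_basis_def chi_def delta_def actB_def actC_def actZ_def
  by (simp add: UNIV_bool algebra_simps)

lemma annihilator_iff:
  "h \<in> annihilator n \<longleftrightarrow> chi n h = 0 \<and> chi (tau n) h = 0 \<and> delta n h = 0"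
proof
  assume "h \<in> annihilator n"
  then have "act n h (1, 0) = (0, 0)" "act n h (0, 1) = (0, 0)"
    by (simp_all add: annihilator_def)
  then show "chi n h = 0 \<and> chi (tau n) h = 0 \<and> delta n h = 0"
    by (simp add: act_eq)
qed (simp add: annihilator_def act_eq)

lemma chi_hadd [simp]: "chi n (hadd f g) = chi n f + chi n g"
  by (simp add: chi_def hadd_def UNIV_bool algebra_simps)

lemma delta_hadd [simp]: "delta n (hadd f g) = delta n f + delta n g"
  by (simp add: delta_def hadd_def UNIV_bool algebra_simps)

lemma chi_hscale [simp]: "chi n (hscale a f) = a * chi n f"
  by (simp add: chi_def hscale_def UNIV_bool algebra_simps)

lemma delta_hscale [simp]: "delta n (hscale a f) = a * delta n f"
  by (simp add: delta_def hscale_def UNIV_bool algebra_simps)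

lemma chi_hmul [simp]: "chi n (hmul f g) = chi n f * chi n g"
  unfolding chi_def hmul_def hsign_def sb_def sc_def
  by (simp add: UNIV_bool algebra_simps)

lemma delta_hmul [simp]:
  "delta n (hmul f g) = delta n f * chi n g + chi (tau n) f * delta n g"
  unfolding chi_def delta_def hmul_def hsign_def sb_tau sc_tau
  unfolding sb_def sc_def
  by (simp add: UNIV_bool algebra_simps)

lemma chi_sum [simp]: "chi n (\<lambda>i j l. \<Sum>q<(N::nat). F q i j l) = (\<Sum>q<N. chi n (F q))"
  by (induction N) (simp_all add: chi_def UNIV_bool algebra_simps)

lemma delta_sum [simp]: "delta n (\<lambda>i j l. \<Sum>q<(N::nat). F q i j l) = (\<Sum>q<N. delta n (F q))"
  by (induction N) (simp_all add: delta_def UNIV_bool algebra_simps)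

lemma chi_hb [simp]: "chi n hb = sb n"
  by (simp add: chi_def hb_def hbasis_def UNIV_bool)

lemma delta_hb [simp]: "delta n hb = 0"
  by (simp add: delta_def hb_def hbasis_def UNIV_bool)

lemma chi_hc [simp]: "chi n hc = sc n"
  by (simp add: chi_def hc_def hbasis_def UNIV_bool)

lemma delta_hc [simp]: "delta n hc = 0"
  by (simp add: delta_def hc_def hbasis_def UNIV_bool)

lemma chi_hone [simp]: "chi n hone = 1"
  by (simp add: chi_def hone_def hbasis_def UNIV_bool)

lemma delta_hone [simp]: "delta n hone = 0"
  by (simp add: delta_def hone_def hbasis_def UNIV_bool)

lemma chi_hz [simp]: "chi n hz = 0"
  by (simp add: chi_def hz_def hbasis_def UNIV_bool)

lemma delta_hz [simp]: "delta n hz = 1"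
  by (simp add: delta_def hz_def hbasis_def UNIV_bool)

lemma chi_he:
  assumes "m \<le> 3" "n \<le> 3"
  shows "chi m (he n :: 'k::field_char_0 H) = (if m = n then 1 else 0)"
proof -
  have "chi m (he n :: 'k H) =
      1/4 * ((1 + (if n = 0 \<or> n = 1 then 1 else -1) * sb m) *
             (1 + (if n = 0 \<or> n = 2 then 1 else -1) * sc m))"
    by (simp add: he_def)
  moreover have "m \<in> {0, 1, 2, 3}" "n \<in> {0, 1, 2, 3}"
    using assms by auto
  ultimately show ?thesis
    by (auto simp: sb_def sc_def)
qed

lemma delta_he [simp]: "delta m (he n) = 0"
  by (simp add: he_def)

lemma H_eqI:
  fixes h h' :: "'k::field_char_0 H"
  assumes "\<And>m. m \<le> 3 \<Longrightarrow> chi m h = chi m h' \<and> delta m h = delta m h'"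
  shows "h = h'"
proof (intro ext)
  fix x y w
  note eqs = assms[of 0] assms[of 1] assms[of 2] assms[of 3]
  show "h x y w = h' x y w"
    using eqs
    by (cases x; cases y; cases w; simp add: chi_def delta_def sb_def sc_def UNIV_bool; algebra)
qed

lemma ideal_gen_subset_annihilator:
  assumes "g \<in> annihilator n"
  shows "ideal_gen g \<subseteq> annihilator n"
  using assms by (auto simp: ideal_gen_def annihilator_iff)

lemma hadd_mem_ideal_gen:
  "hadd (hmul (hmul x a) y) (hmul (hmul x' a) y') \<in> ideal_gen a"
proof -
  let ?x = "\<lambda>n::nat. if n = 0 then x else x'" and ?y = "\<lambda>n::nat. if n = 0 then y else y'"
  have "hadd (hmul (hmul x a) y) (hmul (hmul x' a) y') =
      (\<lambda>i j l. \<Sum>n<2. hmul (hmul (?x n) a) (?y n) i j l)"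
    by (simp add: hadd_def eval_nat_numeral)
  then show ?thesis
    unfolding ideal_gen_def by (intro CollectI exI)
qed

lemma tau_le_3: "tau n \<le> 3"
  by (simp add: tau_def)

lemma tau_tau: "n \<le> 3 \<Longrightarrow> tau (tau n) = n"
  by (simp add: tau_def)

lemma tau_neq: "tau n \<noteq> n"
  unfolding tau_def by arith

lemma tau_orbits_cover:
  assumes "i \<le> 3" "k \<le> 3" "k \<noteq> i" "k \<noteq> tau i" "m \<le> 3"
  shows "m = i \<or> m = tau i \<or> m = k \<or> m = tau k"
  using assms by (auto simp: tau_def)

lemma tau_pairs_distinct:
  assumes "i \<le> 3" "k \<le> 3" "k \<noteq> i" "k \<noteq> tau i"
  shows "tau k \<noteq> i" "tau k \<noteq> tau i"
  using assms tau_tau by metis+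

lemma generator_mem_annihilator:
  assumes "i \<le> 3" "k \<le> 3" "k \<noteq> i" "k \<noteq> tau i"
  shows "(hadd (hmul hz (he (tau i))) (hadd (he k) (he (tau k))) :: 'k::field_char_0 H)
           \<in> annihilator i"
  using assms tau_pairs_distinct[OF assms]
  by (simp add: annihilator_iff chi_he tau_le_3 tau_tau tau_neq tau_neq[symmetric])

lemma annihilator_decomposition:
  fixes h :: "'k::field_char_0 H"
  assumes ik: "i \<le> 3" "k \<le> 3" "k \<noteq> i" "k \<noteq> tau i" and "h \<in> annihilator i"
  defines "E \<equiv> hadd (he k) (he (tau k))"
    and "g \<equiv> hadd (hmul hz (he (tau i))) (hadd (he k) (he (tau k)))"
  shows "h = hadd (hmul (hmul (hmul h E) g) hone)
                  (hmul (hmul (hscale (delta (tau i) h) hone) g) (he (tau i)))" (is "h = ?rhs")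
proof (rule H_eqI)
  fix m :: nat
  assume "m \<le> 3"
  have vanish: "chi i h = 0" "chi (tau i) h = 0" "delta i h = 0"
    using \<open>h \<in> annihilator i\<close> by (simp_all add: annihilator_iff)
  note distinct = tau_pairs_distinct[OF ik]
  note facts = E_def g_def chi_he tau_le_3 tau_tau ik ik(4)[symmetric]
    tau_neq tau_neq[symmetric] distinct distinct[symmetric] vanish
  consider "m = i" | "m = tau i" | "m = k" | "m = tau k"
    using tau_orbits_cover[OF ik \<open>m \<le> 3\<close>] by blast
  then show "chi m h = chi m ?rhs \<and> delta m h = delta m ?rhs"
    by cases (simp_all add: facts)
qed

theorem corollary5p2:
  fixes i k :: nat
  assumes "alg_closed TYPE('k::field_char_0)"
    and "i \<le> 3" and "k \<le> 3" and "k \<noteq> i" and "k \<noteq> tau i"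
  shows "(annihilator i :: 'k H set) =
         ideal_gen (hadd (hmul hz (he (tau i))) (hadd (he k) (he (tau k))))"
proof -
  let ?g = "hadd (hmul hz (he (tau i))) (hadd (he k) (he (tau k))) :: 'k H"
  show ?thesis
  proof
    show "annihilator i \<subseteq> ideal_gen ?g"
      using annihilator_decomposition[OF assms(2-5)] hadd_mem_ideal_gen by (metis subsetI)
    show "ideal_gen ?g \<subseteq> annihilator i"
      using generator_mem_annihilator[OF assms(2-5)] by (rule ideal_gen_subset_annihilator)
  qed
qed

end
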